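(* Let $A$ be a bounded distributive lattice and $X$ its Priestley space. The following are equivalent: (1) $A$ is proHeyting; (2) for all clopen upsets $U,V$ of $X$, $X\setminus{\downarrow}(U\setminus V)$ is a DM-set; (3) for every clopen subset $U$ of $X$, $X\setminus{\downarrow}U$ is a DM-set.
   Context: A relative annihilator of $A$ is $\langle a,b\rangle=\{x\in A:a\wedge x\le b\}$; $A$ is proHeyting if every relative annihilator is a normal ideal (a downset $N$ with $N=N^{u\ell}$). The Priestley space $X$ of $A$ is the set of prime filters ordered by inclusion, topologized by the basis $\{\mathfrak s(a)\setminus\mathfrak s(b)\}$ with $\mathfrak s(a)=\{x:a\in x\}$; $\mathfrak s$ is an isomorphism of $A$ onto the clopen upsets of $X$. With ${\sf cl}$ the topological closure, ${\sf cl_2}(S)={\uparrow}{\sf cl}(S)$ and ${\sf int_1}(S)=X\setminus{\downarrow}(X\setminus{\sf int}(S))$, a DM-set is an open upset $U$ with ${\sf int_1\,cl_2}(U)=U$. *)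

theory Defs
  imports "HOL-Analysis.Analysis"
begin

(* A bounded distributive lattice is rendered as a type of class
   {bounded_lattice, distrib_lattice}; A is the whole type. *)

definition upper_bounds :: "'a::order set \<Rightarrow> 'a set" where
  "upper_bounds S = {x. \<forall>s\<in>S. s \<le> x}"

definition lower_bounds :: "'a::order set \<Rightarrow> 'a set" where
  "lower_bounds S = {x. \<forall>s\<in>S. x \<le> s}"

definition is_downset :: "'a::order set \<Rightarrow> bool" where
  "is_downset N \<longleftrightarrow> (\<forall>x y. y \<in> N \<longrightarrow> x \<le> y \<longrightarrow> x \<in> N)"

definition normal_ideal :: "'a::order set \<Rightarrow> bool" where
  "normal_ideal N \<longleftrightarrow> is_downset N \<and> N = lower_bounds (upper_bounds N)"

definition rel_ann :: "'a::lattice \<Rightarrow> 'a \<Rightarrow> 'a set" where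
  "rel_ann a b = {x. inf a x \<le> b}"

definition proHeyting :: "'a::{bounded_lattice,distrib_lattice} itself \<Rightarrow> bool" where
  "proHeyting (_::'a itself) \<longleftrightarrow> (\<forall>a b :: 'a. normal_ideal (rel_ann a b))"

definition prime_filter :: "'a::{bounded_lattice,distrib_lattice} set \<Rightarrow> bool" where
  "prime_filter F \<longleftrightarrow>
     F \<noteq> {} \<and> bot \<notin> F \<and>
     (\<forall>x y. x \<in> F \<longrightarrow> x \<le> y \<longrightarrow> y \<in> F) \<and>
     (\<forall>x y. x \<in> F \<longrightarrow> y \<in> F \<longrightarrow> inf x y \<in> F) \<and>
     (\<forall>x y. sup x y \<in> F \<longrightarrow> x \<in> F \<or> y \<in> F)"

(* the carrier X of the Priestley space: all prime filters, ordered by inclusion *)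
definition pspace :: "'a::{bounded_lattice,distrib_lattice} itself \<Rightarrow> 'a set set" where
  "pspace _ = {F. prime_filter F}"

definition stone :: "'a::{bounded_lattice,distrib_lattice} \<Rightarrow> 'a set set" where
  "stone a = {x \<in> pspace TYPE('a). a \<in> x}"

definition ptop :: "'a::{bounded_lattice,distrib_lattice} itself \<Rightarrow> 'a set topology" where
  "ptop _ = topology_generated_by {stone a - stone b | a b :: 'a. True}"

definition down_X :: "'a::{bounded_lattice,distrib_lattice} set set \<Rightarrow> 'a set set" where
  "down_X S = {x \<in> pspace TYPE('a). \<exists>y\<in>S. x \<subseteq> y}"

definition up_X :: "'a::{bounded_lattice,distrib_lattice} set set \<Rightarrow> 'a set set" where
  "up_X S = {x \<in> pspace TYPE('a). \<exists>y\<in>S. y \<subseteq> x}"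

definition is_upset_X :: "'a::{bounded_lattice,distrib_lattice} set set \<Rightarrow> bool" where
  "is_upset_X U \<longleftrightarrow> U \<subseteq> pspace TYPE('a) \<and>
     (\<forall>x y. x \<in> U \<longrightarrow> y \<in> pspace TYPE('a) \<longrightarrow> x \<subseteq> y \<longrightarrow> y \<in> U)"

definition cl2 :: "'a::{bounded_lattice,distrib_lattice} set set \<Rightarrow> 'a set set" where
  "cl2 S = up_X (ptop TYPE('a) closure_of S)"

definition int1 :: "'a::{bounded_lattice,distrib_lattice} set set \<Rightarrow> 'a set set" where
  "int1 S = pspace TYPE('a) - down_X (pspace TYPE('a) - ptop TYPE('a) interior_of S)"

definition DM_set :: "'a::{bounded_lattice,distrib_lattice} set set \<Rightarrow> bool" where
  "DM_set U \<longleftrightarrow> openin (ptop TYPE('a)) U \<and> is_upset_X U \<and> int1 (cl2 U) = U"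

definition clopen_X :: "'a::{bounded_lattice,distrib_lattice} set set \<Rightarrow> bool" where
  "clopen_X U \<longleftrightarrow> openin (ptop TYPE('a)) U \<and> closedin (ptop TYPE('a)) U"

end

theory Submission
  imports Defs
begin

text \<open>An ideal \<open>I\<close> of \<open>A\<close> corresponds to the open upset \<open>stone_ideal I = \<Union>\<^sub>a\<^sub>\<in>\<^sub>I s(a)\<close>
  of \<open>X\<close>. By compactness of \<open>X\<close> (Alexander's subbase lemma plus the prime filter theorem), a
  point lies in \<open>int\<^sub>1 S\<close> iff some clopen upset \<open>s(c)\<close> containing it lies in the interior of
  \<open>S\<close>, and \<open>s(c) \<subseteq> cl\<^sub>2 (stone_ideal I)\<close> iff \<open>c \<in> I\<^sup>u\<^sup>l\<close>. Hence
  \<open>int\<^sub>1 (cl\<^sub>2 (stone_ideal I)) = stone_ideal (I\<^sup>u\<^sup>l)\<close>, and since \<open>stone_ideal\<close> is injective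
  on ideals, \<open>stone_ideal I\<close> is a DM-set exactly when \<open>I\<close> is normal. Finally
  \<open>X - \<down>(s(a) - s(b)) = stone_ideal \<langle>a,b\<rangle>\<close>; every clopen set is a finite union of such
  differences, so \<open>X - \<down>U\<close> is the image of a finite intersection of relative annihilators,
  and normal ideals are closed under intersections.\<close>

abbreviation PX :: "'a::{bounded_lattice,distrib_lattice} set set" where
  "PX \<equiv> pspace TYPE('a)"

abbreviation PT :: "'a::{bounded_lattice,distrib_lattice} set topology" where
  "PT \<equiv> ptop TYPE('a)"

section \<open>Filters, ideals and the prime filter theorem\<close>

definition lattice_filter :: "'a::lattice set \<Rightarrow> bool" where
  "lattice_filter F \<longleftrightarrow>
     F \<noteq> {} \<and> (\<forall>x y. x \<in> F \<longrightarrow> x \<le> y \<longrightarrow> y \<in> F) \<and> (\<forall>x\<in>F. \<forall>y\<in>F. inf x y \<in> F)"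

definition lattice_ideal :: "'a::bounded_lattice set \<Rightarrow> bool" where
  "lattice_ideal I \<longleftrightarrow> bot \<in> I \<and> is_downset I \<and> (\<forall>x\<in>I. \<forall>y\<in>I. sup x y \<in> I)"

lemma lattice_filter_atLeast: "lattice_filter {a..}"
  unfolding lattice_filter_def by auto

lemma lattice_ideal_atMost: "lattice_ideal {..b}"
  unfolding lattice_ideal_def is_downset_def by auto

lemma lattice_ideal_Inter: "(\<And>I. I \<in> \<I> \<Longrightarrow> lattice_ideal I) \<Longrightarrow> lattice_ideal (\<Inter>\<I>)"
  unfolding lattice_ideal_def is_downset_def by blast

lemma lattice_filter_finite_lower_bound:
  assumes "lattice_filter F" "finite C" "C \<subseteq> F"
  shows "\<exists>c\<in>F. \<forall>d\<in>C. c \<le> d"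
  using assms(2,3)
proof (induction C rule: finite_induct)
  case empty
  then show ?case using assms(1) unfolding lattice_filter_def by blast
next
  case (insert d C)
  then obtain c where c: "c \<in> F" "\<forall>d'\<in>C. c \<le> d'" by blast
  have "inf c d \<in> F" using c(1) insert.prems assms(1) unfolding lattice_filter_def by blast
  moreover have "\<forall>d'\<in>insert d C. inf c d \<le> d'" using c(2) by (auto intro: le_infI1)
  ultimately show ?case by blast
qed

lemma lattice_ideal_finite_upper_bound:
  assumes "lattice_ideal I" "finite C" "C \<subseteq> I"
  shows "\<exists>e\<in>I. \<forall>d\<in>C. d \<le> e"
  using assms(2,3)
proof (induction C rule: finite_induct)
  case empty
  then show ?case using assms(1) unfolding lattice_ideal_def by blast
next
  case (insert d C)
  then obtain e where e: "e \<in> I" "\<forall>d'\<in>C. d' \<le> e" by blast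
  have "sup e d \<in> I" using e(1) insert.prems assms(1) unfolding lattice_ideal_def by blast
  moreover have "\<forall>d'\<in>insert d C. d' \<le> sup e d" using e(2) by (auto intro: le_supI1)
  ultimately show ?case by blast
qed

lemma prime_filter_upward: "prime_filter F \<Longrightarrow> a \<in> F \<Longrightarrow> a \<le> b \<Longrightarrow> b \<in> F"
  unfolding prime_filter_def by blast

lemma prime_filter_top: "prime_filter F \<Longrightarrow> top \<in> F"
  unfolding prime_filter_def by auto

lemma prime_filter_bot: "prime_filter F \<Longrightarrow> bot \<notin> F"
  unfolding prime_filter_def by auto

lemma prime_filter_inf_iff: "prime_filter F \<Longrightarrow> inf a b \<in> F \<longleftrightarrow> a \<in> F \<and> b \<in> F"
  unfolding prime_filter_def by (meson inf.cobounded1 inf.cobounded2)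

lemma prime_filter_sup_iff: "prime_filter F \<Longrightarrow> sup a b \<in> F \<longleftrightarrow> a \<in> F \<or> b \<in> F"
  unfolding prime_filter_def by (meson sup.cobounded1 sup.cobounded2)

lemma prime_filter_imp_lattice_filter: "prime_filter F \<Longrightarrow> lattice_filter F"
  unfolding prime_filter_def lattice_filter_def by blast

lemma lattice_ideal_Compl_prime_filter:
  assumes "prime_filter F"
  shows "lattice_ideal (- F)"
  using prime_filter_bot[OF assms] prime_filter_sup_iff[OF assms] prime_filter_upward[OF assms]
  unfolding lattice_ideal_def is_downset_def by blast

lemma lattice_filter_Union_chain:
  assumes "\<C> \<noteq> {}" and filters: "\<And>G. G \<in> \<C> \<Longrightarrow> lattice_filter G"
    and chain: "\<And>G H. G \<in> \<C> \<Longrightarrow> H \<in> \<C> \<Longrightarrow> G \<subseteq> H \<or> H \<subseteq> G"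
  shows "lattice_filter (\<Union>\<C>)"
  unfolding lattice_filter_def
proof (intro conjI allI impI ballI)
  obtain G where "G \<in> \<C>" using assms(1) by blast
  moreover from this have "G \<noteq> {}" using filters unfolding lattice_filter_def by blast
  ultimately show "\<Union>\<C> \<noteq> {}" by blast
next
  fix x y assume "x \<in> \<Union>\<C>" "x \<le> y"
  then obtain G where "G \<in> \<C>" "x \<in> G" by blast
  with filters[of G] \<open>x \<le> y\<close> show "y \<in> \<Union>\<C>" unfolding lattice_filter_def by blast
next
  fix x y assume "x \<in> \<Union>\<C>" "y \<in> \<Union>\<C>"
  then obtain G H where GH: "G \<in> \<C>" "H \<in> \<C>" "x \<in> G" "y \<in> H" by blast
  from chain[OF GH(1,2)] obtain K where "K \<in> \<C>" "x \<in> K" "y \<in> K"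
    using GH by blast
  with filters[of K] show "inf x y \<in> \<Union>\<C>" unfolding lattice_filter_def by blast
qed

lemma lattice_filter_adjoin:
  fixes F :: "'a::lattice set"
  assumes "lattice_filter F"
  shows "lattice_filter {d. \<exists>c\<in>F. inf c a \<le> d}"
  unfolding lattice_filter_def
proof (intro conjI allI impI ballI)
  show "{d. \<exists>c\<in>F. inf c a \<le> d} \<noteq> {}" using assms unfolding lattice_filter_def by blast
next
  fix x y assume "x \<in> {d. \<exists>c\<in>F. inf c a \<le> d}" "x \<le> y"
  then show "y \<in> {d. \<exists>c\<in>F. inf c a \<le> d}" by (auto intro: order_trans)
next
  fix x y assume "x \<in> {d. \<exists>c\<in>F. inf c a \<le> d}" "y \<in> {d. \<exists>c\<in>F. inf c a \<le> d}"
  then obtain c1 c2 where c: "c1 \<in> F" "c2 \<in> F" "inf c1 a \<le> x" "inf c2 a \<le> y" by blast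
  then have "inf c1 c2 \<in> F" using assms unfolding lattice_filter_def by blast
  moreover have "inf (inf c1 c2) a \<le> inf x y"
  proof (rule le_infI)
    have "inf (inf c1 c2) a \<le> inf c1 a" by (simp add: inf.coboundedI1 inf_mono)
    then show "inf (inf c1 c2) a \<le> x" using c(3) by (rule order_trans)
    have "inf (inf c1 c2) a \<le> inf c2 a" by (simp add: le_infI1 inf_mono)
    then show "inf (inf c1 c2) a \<le> y" using c(4) by (rule order_trans)
  qed
  ultimately show "inf x y \<in> {d. \<exists>c\<in>F. inf c a \<le> d}" by blast
qed

lemma maximal_disjoint_filter_prime:
  fixes M :: "'a::{bounded_lattice,distrib_lattice} set"
  assumes I: "lattice_ideal I" and M: "lattice_filter M" "M \<inter> I = {}"
    and maximal: "\<And>G. lattice_filter G \<Longrightarrow> M \<subseteq> G \<Longrightarrow> G \<inter> I = {} \<Longrightarrow> G = M"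
  shows "prime_filter M"
proof -
  have meets_ideal: "\<exists>c\<in>M. \<exists>i\<in>I. inf c a \<le> i" if "a \<notin> M" for a
  proof (rule ccontr)
    let ?G = "{d. \<exists>c\<in>M. inf c a \<le> d}"
    assume "\<not> ?thesis"
    then have "?G \<inter> I = {}" by blast
    moreover have "M \<subseteq> ?G" by (auto intro: le_infI1)
    ultimately have "?G = M" using maximal lattice_filter_adjoin[OF M(1)] by blast
    moreover have "a \<in> ?G" using M(1) unfolding lattice_filter_def by auto
    ultimately show False using that by blast
  qed
  have "a \<in> M \<or> b \<in> M" if ab: "sup a b \<in> M" for a b
  proof (rule ccontr)
    assume "\<not> (a \<in> M \<or> b \<in> M)"
    then obtain c1 i1 c2 i2
      where c: "c1 \<in> M" "i1 \<in> I" "inf c1 a \<le> i1" "c2 \<in> M" "i2 \<in> I" "inf c2 b \<le> i2"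
      using meets_ideal by meson
    let ?m = "inf (inf c1 c2) (sup a b)"
    have "?m \<in> M" using c ab M(1) unfolding lattice_filter_def by blast
    have "?m = sup (inf (inf c1 c2) a) (inf (inf c1 c2) b)"
      by (rule inf_sup_distrib1)
    also have "\<dots> \<le> sup (inf c1 a) (inf c2 b)"
      by (intro sup_mono inf_mono) simp_all
    also have "\<dots> \<le> sup i1 i2"
      using c(3,6) by (rule sup_mono)
    finally have "?m \<in> I" using c I unfolding lattice_ideal_def is_downset_def by blast
    with \<open>?m \<in> M\<close> M(2) show False by blast
  qed
  moreover have "bot \<notin> M" using I M(2) unfolding lattice_ideal_def by blast
  ultimately show ?thesis using M(1) unfolding prime_filter_def lattice_filter_def by blast
qed

theorem prime_filter_separation:
  fixes F I :: "'a::{bounded_lattice,distrib_lattice} set"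
  assumes "lattice_filter F" "lattice_ideal I" "F \<inter> I = {}"
  obtains P where "prime_filter P" "F \<subseteq> P" "P \<inter> I = {}"
proof -
  let ?\<A> = "{G. lattice_filter G \<and> F \<subseteq> G \<and> G \<inter> I = {}}"
  have "\<exists>M\<in>?\<A>. \<forall>G\<in>?\<A>. M \<subseteq> G \<longrightarrow> G = M"
  proof (rule subset_Zorn_nonempty)
    show "?\<A> \<noteq> {}" using assms by blast
  next
    fix \<C> assume "\<C> \<noteq> {}" "subset.chain ?\<A> \<C>"
    moreover from this have "lattice_filter (\<Union>\<C>)"
      unfolding subset_chain_def by (intro lattice_filter_Union_chain) blast+
    ultimately show "\<Union>\<C> \<in> ?\<A>" unfolding subset_chain_def by blast
  qed
  then obtain M where M: "M \<in> ?\<A>" and maximal: "\<forall>G\<in>?\<A>. M \<subseteq> G \<longrightarrow> G = M"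
    by blast
  then have "prime_filter M"
    by (intro maximal_disjoint_filter_prime[OF assms(2)]) auto
  with M show thesis using that by blast
qed

section \<open>The Stone map and the Priestley topology\<close>

lemma mem_pspace: "x \<in> PX \<longleftrightarrow> prime_filter x"
  by (simp add: pspace_def)

lemma pspace_upward: "x \<in> PX \<Longrightarrow> a \<in> x \<Longrightarrow> a \<le> b \<Longrightarrow> b \<in> x"
  unfolding mem_pspace by (rule prime_filter_upward)

lemma stone_subset_pspace: "stone a \<subseteq> PX"
  by (auto simp: stone_def)

lemma stone_inf: "stone (inf a b) = stone a \<inter> stone b"
  by (auto simp: stone_def mem_pspace prime_filter_inf_iff)

lemma stone_sup: "stone (sup a b) = stone a \<union> stone b"
  by (auto simp: stone_def mem_pspace prime_filter_sup_iff)

lemma stone_top: "stone (top::'a::{bounded_lattice,distrib_lattice}) = PX"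
  by (auto simp: stone_def mem_pspace prime_filter_top)

lemma stone_bot: "stone (bot::'a::{bounded_lattice,distrib_lattice}) = {}"
  by (auto simp: stone_def mem_pspace prime_filter_bot)

lemma stone_subset_iff: "stone a \<subseteq> stone b \<longleftrightarrow> a \<le> b"
proof
  assume "stone a \<subseteq> stone b"
  then show "a \<le> b"
  proof (rule contrapos_pp)
    assume "\<not> a \<le> b"
    then have "{a..} \<inter> {..b} = {}" by (auto dest: order.trans)
    then obtain x where "prime_filter x" "{a..} \<subseteq> x" "x \<inter> {..b} = {}"
      by (rule prime_filter_separation[OF lattice_filter_atLeast lattice_ideal_atMost])
    then show "\<not> stone a \<subseteq> stone b" by (auto simp: stone_def mem_pspace)
  qed
next
  assume "a \<le> b"
  then show "stone a \<subseteq> stone b"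
    unfolding stone_def mem_pspace using prime_filter_upward by blast
qed

lemma topspace_ptop: "topspace (PT::'a::{bounded_lattice,distrib_lattice} set topology) = PX"
proof -
  have "PX = stone top - stone (bot::'a)" by (simp add: stone_top stone_bot)
  then have "PX \<in> {stone a - stone b | a b :: 'a. True}" by blast
  then have "\<Union>{stone a - stone b | a b :: 'a. True} = PX"
    using stone_subset_pspace by blast
  then show ?thesis unfolding ptop_def topology_generated_by_topspace .
qed

lemma openin_stone_diff: "openin PT (stone a - stone b)"
  unfolding ptop_def by (rule topology_generated_by_Basis) blast

lemma openin_stone: "openin PT (stone a)"
  using openin_stone_diff[of a bot] by (simp add: stone_bot)

lemma openin_pspace_diff_stone: "openin PT (PX - stone b)"
  using openin_stone_diff[of top b] by (simp add: stone_top)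

lemma closedin_stone: "closedin PT (stone a)"
  unfolding closedin_def topspace_ptop using stone_subset_pspace openin_pspace_diff_stone by blast

lemma ptop_basis:
  fixes U :: "'a::{bounded_lattice,distrib_lattice} set set"
  assumes "openin PT U" "x \<in> U"
  shows "\<exists>a b. x \<in> stone a - stone b \<and> stone a - stone b \<subseteq> U"
proof -
  have "generate_topology_on {stone a - stone b | a b :: 'a. True} U"
    using assms(1) unfolding ptop_def by (simp add: openin_topology_generated_by_iff)
  then show ?thesis using assms(2)
  proof (induction arbitrary: x)
    case (Int A B)
    then have "x \<in> A" "x \<in> B" by simp_all
    then obtain a1 b1 a2 b2 where "x \<in> stone a1 - stone b1" "stone a1 - stone b1 \<subseteq> A"
      and "x \<in> stone a2 - stone b2" "stone a2 - stone b2 \<subseteq> B" using Int.IH by blast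
    moreover have "stone (inf a1 a2) - stone (sup b1 b2) = (stone a1 - stone b1) \<inter> (stone a2 - stone b2)"
      by (auto simp: stone_inf stone_sup)
    ultimately show ?case by blast
  next
    case (UN K)
    then obtain k where "k \<in> K" "x \<in> k" by blast
    with UN.IH show ?case by blast
  next
    case (Basis s)
    then show ?case by blast
  qed simp
qed

lemma ptop_eq_subbase:
  "(PT::'a::{bounded_lattice,distrib_lattice} set topology) =
     topology (arbitrary union_of
       (finite intersection_of (\<lambda>S. S \<in> range stone \<union> range (\<lambda>b. PX - stone b)) relative_to PX))"
  (is "_ = topology (arbitrary union_of (finite intersection_of ?P relative_to PX))")
proof (subst topology_eq, intro allI iffI)
  let ?T = "topology (arbitrary union_of (finite intersection_of ?P relative_to PX))"
  fix S :: "'a set set"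
  have subbase_open: "openin ?T S" if "?P S" for S
  proof -
    have "(finite intersection_of ?P relative_to PX) (PX \<inter> S)"
      using that by (intro relative_to_inc finite_intersection_of_inc)
    moreover have "PX \<inter> S = S" using that stone_subset_pspace by blast
    ultimately have "(finite intersection_of ?P relative_to PX) S" by simp
    then show ?thesis unfolding openin_subbase by (rule arbitrary_union_of_inc)
  qed
  assume "openin PT S"
  then have "generate_topology_on {stone a - stone b | a b :: 'a. True} S"
    unfolding ptop_def by (simp add: openin_topology_generated_by_iff)
  then show "openin ?T S"
  proof (rule generate_topology_on_coarsest[OF istopology_openin, rotated])
    fix s assume "s \<in> {stone a - stone b | a b :: 'a. True}"
    then obtain a b where "s = stone a - stone b" by blast
    then have "s = stone a \<inter> (PX - stone b)" using stone_subset_pspace[of a] by blast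
    moreover have "openin ?T (stone a)" "openin ?T (PX - stone b)"
      by (blast intro: subbase_open)+
    ultimately show "openin ?T s" by (simp add: openin_Int)
  qed
next
  fix S :: "'a set set"
  assume S: "openin (topology (arbitrary union_of (finite intersection_of ?P relative_to PX))) S"
  have "openin PT PX" using openin_topspace[of PT] by (simp add: topspace_ptop)
  moreover have "openin PT S" if "?P S" for S
    using that openin_stone openin_pspace_diff_stone by blast
  ultimately show "openin PT S" using minimal_topology_subbase[OF _ _ S] by blast
qed

text \<open>Stand-ins for the filter generated by \<open>T\<close> and the ideal generated by \<open>S\<close> that avoid
  finite meets and joins.\<close>

lemma lattice_filter_forced:
  fixes T :: "'a::{bounded_lattice,distrib_lattice} set"
  shows "lattice_filter {d. \<exists>T0. finite T0 \<and> T0 \<subseteq> T \<and> (\<forall>x\<in>PX. T0 \<subseteq> x \<longrightarrow> d \<in> x)}"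
    (is "lattice_filter ?F")
  unfolding lattice_filter_def
proof (intro conjI allI impI ballI)
  have "top \<in> ?F" by (intro CollectI exI[of _ "{}"]) (simp add: mem_pspace prime_filter_top)
  then show "?F \<noteq> {}" by blast
next
  fix c d assume "c \<in> ?F" "c \<le> d"
  then obtain T0 where T0: "finite T0" "T0 \<subseteq> T" "\<forall>x\<in>PX. T0 \<subseteq> x \<longrightarrow> c \<in> x"
    by auto
  have "\<forall>x\<in>PX. T0 \<subseteq> x \<longrightarrow> d \<in> x"
    using T0(3) pspace_upward \<open>c \<le> d\<close> by blast
  with T0(1,2) show "d \<in> ?F" by blast
next
  fix c d assume "c \<in> ?F" "d \<in> ?F"
  then obtain T1 T2 where "finite T1" "T1 \<subseteq> T" "\<forall>x\<in>PX. T1 \<subseteq> x \<longrightarrow> c \<in> x"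
    "finite T2" "T2 \<subseteq> T" "\<forall>x\<in>PX. T2 \<subseteq> x \<longrightarrow> d \<in> x" by auto
  then show "inf c d \<in> ?F"
    by (intro CollectI exI[of _ "T1 \<union> T2"]) (auto simp: mem_pspace prime_filter_inf_iff)
qed

lemma lattice_ideal_forcing:
  fixes S :: "'a::{bounded_lattice,distrib_lattice} set"
  shows "lattice_ideal {d. \<exists>S0. finite S0 \<and> S0 \<subseteq> S \<and> (\<forall>x\<in>PX. d \<in> x \<longrightarrow> S0 \<inter> x \<noteq> {})}"
    (is "lattice_ideal ?I")
  unfolding lattice_ideal_def is_downset_def
proof (intro conjI allI impI ballI)
  show "bot \<in> ?I" by (intro CollectI exI[of _ "{}"]) (simp add: mem_pspace prime_filter_bot)
next
  fix c d assume "d \<in> ?I" "c \<le> d"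
  then obtain S0 where S0: "finite S0" "S0 \<subseteq> S" "\<forall>x\<in>PX. d \<in> x \<longrightarrow> S0 \<inter> x \<noteq> {}"
    by auto
  have "\<forall>x\<in>PX. c \<in> x \<longrightarrow> S0 \<inter> x \<noteq> {}"
    using S0(3) pspace_upward \<open>c \<le> d\<close> by blast
  with S0(1,2) show "c \<in> ?I" by blast
next
  fix c d assume "c \<in> ?I" "d \<in> ?I"
  then obtain S1 S2 where "finite S1" "S1 \<subseteq> S" "\<forall>x\<in>PX. c \<in> x \<longrightarrow> S1 \<inter> x \<noteq> {}"
    "finite S2" "S2 \<subseteq> S" "\<forall>x\<in>PX. d \<in> x \<longrightarrow> S2 \<inter> x \<noteq> {}" by auto
  then show "sup c d \<in> ?I"
    by (intro CollectI exI[of _ "S1 \<union> S2"]) (auto simp: mem_pspace prime_filter_sup_iff)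
qed

text \<open>If the sets \<open>s(a)\<close>, \<open>a \<in> S\<close>, and \<open>X - s(b)\<close>, \<open>b \<in> T\<close>, had no finite subcover, the filter
  generated by \<open>T\<close> would miss the ideal generated by \<open>S\<close>, and a prime filter separating them
  would be a point not covered.\<close>

lemma stone_cover_finite_subcover:
  fixes S T :: "'a::{bounded_lattice,distrib_lattice} set"
  assumes cover: "PX \<subseteq> (\<Union>a\<in>S. stone a) \<union> (\<Union>b\<in>T. PX - stone b)"
  obtains S0 T0 where "finite S0" "S0 \<subseteq> S" "finite T0" "T0 \<subseteq> T"
    "PX \<subseteq> (\<Union>a\<in>S0. stone a) \<union> (\<Union>b\<in>T0. PX - stone b)"
proof -
  define F where "F = {d. \<exists>T0. finite T0 \<and> T0 \<subseteq> T \<and> (\<forall>x\<in>PX. T0 \<subseteq> x \<longrightarrow> d \<in> x)}"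
  define I where "I = {d. \<exists>S0. finite S0 \<and> S0 \<subseteq> S \<and> (\<forall>x\<in>PX. d \<in> x \<longrightarrow> S0 \<inter> x \<noteq> {})}"
  have "F \<inter> I \<noteq> {}"
  proof
    assume "F \<inter> I = {}"
    have "lattice_filter F" unfolding F_def by (rule lattice_filter_forced)
    moreover have "lattice_ideal I" unfolding I_def by (rule lattice_ideal_forcing)
    ultimately obtain P where P: "prime_filter P" "F \<subseteq> P" "P \<inter> I = {}"
      using \<open>F \<inter> I = {}\<close> by (rule prime_filter_separation)
    then have "P \<in> (\<Union>a\<in>S. stone a) \<union> (\<Union>b\<in>T. PX - stone b)"
      using cover by (auto simp: mem_pspace)
    then consider a where "a \<in> S" "P \<in> stone a" | b where "b \<in> T" "P \<notin> stone b" by blast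
    then show False
    proof cases
      case (1 a)
      then have "a \<in> I" unfolding I_def by (intro CollectI exI[of _ "{a}"]) auto
      moreover have "a \<in> P" using 1 by (simp add: stone_def)
      ultimately show False using P by blast
    next
      case (2 b)
      then have "b \<in> F" unfolding F_def by (intro CollectI exI[of _ "{b}"]) auto
      moreover have "b \<notin> P" using 2 P(1) by (simp add: stone_def mem_pspace)
      ultimately show False using P by blast
    qed
  qed
  then obtain d where "d \<in> F" "d \<in> I" by blast
  from \<open>d \<in> F\<close> obtain T0 where T0: "finite T0" "T0 \<subseteq> T" "\<forall>x\<in>PX. T0 \<subseteq> x \<longrightarrow> d \<in> x"
    unfolding F_def by auto
  from \<open>d \<in> I\<close> obtain S0 where S0: "finite S0" "S0 \<subseteq> S" "\<forall>x\<in>PX. d \<in> x \<longrightarrow> S0 \<inter> x \<noteq> {}"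
    unfolding I_def by auto
  have "PX \<subseteq> (\<Union>a\<in>S0. stone a) \<union> (\<Union>b\<in>T0. PX - stone b)"
  proof
    fix x :: "'a set" assume x: "x \<in> PX"
    show "x \<in> (\<Union>a\<in>S0. stone a) \<union> (\<Union>b\<in>T0. PX - stone b)"
    proof (cases "T0 \<subseteq> x")
      case True
      then have "S0 \<inter> x \<noteq> {}" using T0(3) S0(3) x by blast
      then show ?thesis using x by (auto simp: stone_def)
    next
      case False
      then show ?thesis using x by (auto simp: stone_def)
    qed
  qed
  with S0(1,2) T0(1,2) show thesis by (rule that)
qed

theorem compact_space_ptop: "compact_space (PT::'a::{bounded_lattice,distrib_lattice} set topology)"
proof (rule Alexander_subbase_alt[where U = PX])
  have "PX \<in> range stone" by (metis rangeI stone_top)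
  then show "PX \<subseteq> \<Union>(range stone \<union> range (\<lambda>b. PX - stone b))" by blast
next
  fix \<C> :: "'a set set set"
  assume \<C>: "\<C> \<subseteq> range stone \<union> range (\<lambda>b. PX - stone b)" and cover: "PX \<subseteq> \<Union>\<C>"
  define S where "S = {a. stone a \<in> \<C>}"
  define T where "T = {b. PX - stone b \<in> \<C>}"
  have "PX \<subseteq> (\<Union>a\<in>S. stone a) \<union> (\<Union>b\<in>T. PX - stone b)"
  proof
    fix x :: "'a set" assume "x \<in> PX"
    then obtain C where "C \<in> \<C>" "x \<in> C" using cover by blast
    with \<C> show "x \<in> (\<Union>a\<in>S. stone a) \<union> (\<Union>b\<in>T. PX - stone b)"
      unfolding S_def T_def by auto
  qed
  then obtain S0 T0 where "finite S0" "S0 \<subseteq> S" "finite T0" "T0 \<subseteq> T"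
    and "PX \<subseteq> (\<Union>a\<in>S0. stone a) \<union> (\<Union>b\<in>T0. PX - stone b)"
    by (rule stone_cover_finite_subcover)
  then show "\<exists>\<C>'. finite \<C>' \<and> \<C>' \<subseteq> \<C> \<and> PX \<subseteq> \<Union>\<C>'"
    by (intro exI[of _ "stone ` S0 \<union> (\<lambda>b. PX - stone b) ` T0"]) (auto simp: S_def T_def)
next
  show "topology (arbitrary union_of (finite intersection_of
      (\<lambda>S. S \<in> range stone \<union> range (\<lambda>b. PX - stone b)) relative_to PX)) = PT"
    by (rule ptop_eq_subbase[symmetric])
qed

lemma closedin_finite_subcover:
  fixes K :: "'a::{bounded_lattice,distrib_lattice} set set"
  assumes "closedin PT K" "K \<subseteq> (\<Union>i\<in>E. f i)" "\<And>i. i \<in> E \<Longrightarrow> openin PT (f i)"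
  obtains E0 where "finite E0" "E0 \<subseteq> E" "K \<subseteq> (\<Union>i\<in>E0. f i)"
proof -
  have "compactin PT K" by (rule closedin_compact_space[OF compact_space_ptop assms(1)])
  then have "\<exists>\<F>. finite \<F> \<and> \<F> \<subseteq> f ` E \<and> K \<subseteq> \<Union>\<F>"
    by (rule compactinD) (use assms(2,3) in auto)
  then obtain E0 where "finite E0" "E0 \<subseteq> E" "K \<subseteq> \<Union>(f ` E0)"
    unfolding ex_finite_subset_image by blast
  then show thesis by (rule that)
qed

text \<open>Both separation properties come from compactness: a finite subfamily of the clopen
  sets covering \<open>K\<close> suffices, and the meet (resp. join) of the finitely many elements involved
  stays inside \<open>x\<close> (resp. outside \<open>y\<close>).\<close>

lemma exists_stone_disjoint_closed:
  assumes K: "closedin PT K" and x: "x \<in> PX" "x \<notin> down_X K"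
  obtains c where "c \<in> x" "stone c \<inter> K = {}"
proof -
  have "K \<subseteq> (\<Union>c\<in>x. PX - stone c)"
  proof
    fix y assume "y \<in> K"
    then have "y \<in> PX" "\<not> x \<subseteq> y"
      using x closedin_subset[OF K] unfolding topspace_ptop down_X_def by auto
    then show "y \<in> (\<Union>c\<in>x. PX - stone c)" by (auto simp: stone_def)
  qed
  then obtain C where C: "finite C" "C \<subseteq> x" "K \<subseteq> (\<Union>d\<in>C. PX - stone d)"
    by (rule closedin_finite_subcover[OF K]) (rule openin_pspace_diff_stone)
  have "lattice_filter x" using x(1) by (simp add: mem_pspace prime_filter_imp_lattice_filter)
  then obtain c where c: "c \<in> x" "\<forall>d\<in>C. c \<le> d"
    using lattice_filter_finite_lower_bound C(1,2) by blast
  then have "stone c \<subseteq> stone d" if "d \<in> C" for d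
    using that by (simp add: stone_subset_iff)
  then have "stone c \<inter> K = {}" using C(3) by blast
  with c(1) show thesis by (rule that)
qed

lemma exists_stone_superset_closed:
  assumes K: "closedin PT K" and y: "y \<in> PX" "y \<notin> up_X K"
  obtains e where "e \<notin> y" "K \<subseteq> stone e"
proof -
  have "K \<subseteq> (\<Union>e\<in>-y. stone e)"
  proof
    fix x assume "x \<in> K"
    then have "x \<in> PX" "\<not> x \<subseteq> y"
      using y closedin_subset[OF K] unfolding topspace_ptop up_X_def by auto
    then show "x \<in> (\<Union>e\<in>-y. stone e)" by (auto simp: stone_def)
  qed
  then obtain E where E: "finite E" "E \<subseteq> -y" "K \<subseteq> (\<Union>d\<in>E. stone d)"
    by (rule closedin_finite_subcover[OF K]) (rule openin_stone)
  have "lattice_ideal (-y)" using y(1) by (simp add: mem_pspace lattice_ideal_Compl_prime_filter)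
  then obtain e where e: "e \<in> -y" "\<forall>d\<in>E. d \<le> e"
    using lattice_ideal_finite_upper_bound E(1,2) by blast
  then have "stone d \<subseteq> stone e" if "d \<in> E" for d
    using that by (simp add: stone_subset_iff)
  then have "K \<subseteq> stone e" using E(3) by blast
  with e(1) show thesis using that by blast
qed

lemma int1_iff_stone: "x \<in> int1 S \<longleftrightarrow> x \<in> PX \<and> (\<exists>c\<in>x. stone c \<subseteq> PT interior_of S)"
proof
  assume "x \<in> int1 S"
  then have x: "x \<in> PX" "x \<notin> down_X (PX - PT interior_of S)" unfolding int1_def by auto
  have "closedin PT (PX - PT interior_of S)"
    using closedin_diff[OF closedin_topspace[of PT] openin_interior_of[of PT S]]
    by (simp add: topspace_ptop)
  then obtain c where "c \<in> x" "stone c \<inter> (PX - PT interior_of S) = {}"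
    using x by (rule exists_stone_disjoint_closed)
  with x(1) show "x \<in> PX \<and> (\<exists>c\<in>x. stone c \<subseteq> PT interior_of S)"
    using stone_subset_pspace by blast
next
  assume "x \<in> PX \<and> (\<exists>c\<in>x. stone c \<subseteq> PT interior_of S)"
  then obtain c where x: "x \<in> PX" "c \<in> x" and c: "stone c \<subseteq> PT interior_of S" by blast
  have "y \<in> PT interior_of S" if "y \<in> PX" "x \<subseteq> y" for y
    using that x c by (auto simp: stone_def)
  with x(1) show "x \<in> int1 S" unfolding int1_def down_X_def by blast
qed

lemma cl2_subset_closed_upset:
  assumes "closedin PT C" "is_upset_X C" "S \<subseteq> C"
  shows "cl2 S \<subseteq> C"
  using closure_of_minimal[OF assms(3,1)] assms(2) unfolding cl2_def up_X_def is_upset_X_def by blast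

lemma is_upset_stone: "is_upset_X (stone a)"
  unfolding is_upset_X_def stone_def by blast

lemma clopen_stone: "clopen_X (stone a)"
  unfolding clopen_X_def using openin_stone closedin_stone by blast

section \<open>Ideals as open upsets\<close>

definition stone_ideal :: "'a::{bounded_lattice,distrib_lattice} set \<Rightarrow> 'a set set" where
  "stone_ideal I = (\<Union>a\<in>I. stone a)"

lemma mem_stone_ideal: "x \<in> stone_ideal I \<longleftrightarrow> x \<in> PX \<and> x \<inter> I \<noteq> {}"
  by (auto simp: stone_ideal_def stone_def)

lemma openin_stone_ideal: "openin PT (stone_ideal I)"
  unfolding stone_ideal_def by (rule openin_Union) (auto simp: openin_stone)

lemma is_upset_stone_ideal: "is_upset_X (stone_ideal I)"
  unfolding is_upset_X_def by (auto simp: mem_stone_ideal)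

lemma stone_ideal_UNIV: "stone_ideal UNIV = PX"
  unfolding mem_stone_ideal set_eq_iff mem_pspace prime_filter_def by blast

lemma stone_ideal_Int:
  assumes "is_downset I" "is_downset J"
  shows "stone_ideal (I \<inter> J) = stone_ideal I \<inter> stone_ideal J"
proof
  show "stone_ideal I \<inter> stone_ideal J \<subseteq> stone_ideal (I \<inter> J)"
  proof
    fix x assume "x \<in> stone_ideal I \<inter> stone_ideal J"
    then obtain i j where x: "x \<in> PX" "i \<in> x" "j \<in> x" and ij: "i \<in> I" "j \<in> J"
      by (auto simp: mem_stone_ideal)
    from x have "inf i j \<in> x" by (simp add: mem_pspace prime_filter_inf_iff)
    moreover have "inf i j \<in> I \<inter> J"
      using assms ij inf.cobounded1[of i j] inf.cobounded2[of i j] unfolding is_downset_def by blast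
    ultimately show "x \<in> stone_ideal (I \<inter> J)" using x(1) unfolding mem_stone_ideal by blast
  qed
qed (auto simp: stone_ideal_def)

lemma stone_ideal_subset_iff:
  assumes "lattice_ideal J"
  shows "stone_ideal I \<subseteq> stone_ideal J \<longleftrightarrow> I \<subseteq> J"
proof
  assume sub: "stone_ideal I \<subseteq> stone_ideal J"
  show "I \<subseteq> J"
  proof
    fix c assume "c \<in> I"
    show "c \<in> J"
    proof (rule ccontr)
      assume "c \<notin> J"
      then have "{c..} \<inter> J = {}"
        using assms unfolding lattice_ideal_def is_downset_def by force
      then obtain x where x: "prime_filter x" "{c..} \<subseteq> x" "x \<inter> J = {}"
        by (rule prime_filter_separation[OF lattice_filter_atLeast assms])
      then have "x \<in> stone_ideal I" using \<open>c \<in> I\<close> by (auto simp: mem_stone_ideal mem_pspace)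
      then have "x \<in> stone_ideal J" using sub by blast
      with x(3) show False by (auto simp: mem_stone_ideal)
    qed
  qed
qed (auto simp: stone_ideal_def)

lemma stone_subset_cl2_stone_ideal_iff:
  "stone c \<subseteq> cl2 (stone_ideal I) \<longleftrightarrow> c \<in> lower_bounds (upper_bounds I)"
proof
  assume sub: "stone c \<subseteq> cl2 (stone_ideal I)"
  have "stone c \<subseteq> stone e" if "e \<in> upper_bounds I" for e
  proof -
    have "stone i \<subseteq> stone e" if "i \<in> I" for i
      using \<open>e \<in> upper_bounds I\<close> that by (simp add: upper_bounds_def stone_subset_iff)
    then have "stone_ideal I \<subseteq> stone e" unfolding stone_ideal_def by blast
    then have "cl2 (stone_ideal I) \<subseteq> stone e"
      by (rule cl2_subset_closed_upset[OF closedin_stone is_upset_stone])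
    with sub show ?thesis by blast
  qed
  then show "c \<in> lower_bounds (upper_bounds I)"
    unfolding lower_bounds_def by (simp add: stone_subset_iff)
next
  assume c: "c \<in> lower_bounds (upper_bounds I)"
  show "stone c \<subseteq> cl2 (stone_ideal I)"
  proof
    fix y assume y: "y \<in> stone c"
    show "y \<in> cl2 (stone_ideal I)"
    proof (rule ccontr)
      assume "y \<notin> cl2 (stone_ideal I)"
      with y have "y \<in> PX" "y \<notin> up_X (PT closure_of stone_ideal I)"
        unfolding cl2_def by (auto simp: stone_def)
      then obtain e where "e \<notin> y" and e: "PT closure_of stone_ideal I \<subseteq> stone e"
        by (rule exists_stone_superset_closed[OF closedin_closure_of])
      have "stone_ideal I \<subseteq> PT closure_of stone_ideal I"
        by (rule closure_of_subset[OF openin_subset[OF openin_stone_ideal]])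
      with e have "stone i \<subseteq> stone e" if "i \<in> I" for i
        using that unfolding stone_ideal_def by blast
      then have "e \<in> upper_bounds I" unfolding upper_bounds_def by (simp add: stone_subset_iff)
      with c have "stone c \<subseteq> stone e" unfolding lower_bounds_def by (simp add: stone_subset_iff)
      with y \<open>e \<notin> y\<close> show False by (auto simp: stone_def)
    qed
  qed
qed

theorem int1_cl2_stone_ideal:
  "int1 (cl2 (stone_ideal I)) = stone_ideal (lower_bounds (upper_bounds I))"
  by (auto simp: int1_iff_stone interior_of_maximal_eq[OF openin_stone]
      stone_subset_cl2_stone_ideal_iff mem_stone_ideal)

lemma subset_lower_upper_bounds: "S \<subseteq> lower_bounds (upper_bounds S)"
  unfolding lower_bounds_def upper_bounds_def by blast

theorem DM_set_stone_ideal_iff: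
  assumes "lattice_ideal I"
  shows "DM_set (stone_ideal I) \<longleftrightarrow> normal_ideal I"
proof -
  let ?N = "lower_bounds (upper_bounds I)"
  have "DM_set (stone_ideal I) \<longleftrightarrow> stone_ideal ?N = stone_ideal I"
    by (simp add: DM_set_def int1_cl2_stone_ideal openin_stone_ideal is_upset_stone_ideal)
  also have "\<dots> \<longleftrightarrow> ?N \<subseteq> I"
  proof
    assume "stone_ideal ?N = stone_ideal I"
    then show "?N \<subseteq> I" using stone_ideal_subset_iff[OF assms, of ?N] by simp
  next
    assume "?N \<subseteq> I"
    then have "?N = I" using subset_lower_upper_bounds[of I] by (rule subset_antisym)
    then show "stone_ideal ?N = stone_ideal I" by simp
  qed
  also have "\<dots> \<longleftrightarrow> normal_ideal I"
    using assms subset_lower_upper_bounds[of I] unfolding normal_ideal_def lattice_ideal_def by auto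
  finally show ?thesis .
qed

lemma normal_ideal_Inter:
  assumes "\<And>N. N \<in> \<N> \<Longrightarrow> normal_ideal N"
  shows "normal_ideal (\<Inter>\<N>)"
proof -
  have "lower_bounds (upper_bounds (\<Inter>\<N>)) \<subseteq> N" if "N \<in> \<N>" for N
  proof -
    have "lower_bounds (upper_bounds (\<Inter>\<N>)) \<subseteq> lower_bounds (upper_bounds N)"
      using that unfolding lower_bounds_def upper_bounds_def by blast
    also have "\<dots> = N" using assms[OF that] unfolding normal_ideal_def by simp
    finally show ?thesis .
  qed
  then have "\<Inter>\<N> = lower_bounds (upper_bounds (\<Inter>\<N>))"
    using subset_lower_upper_bounds[of "\<Inter>\<N>"] by blast
  moreover have "is_downset (\<Inter>\<N>)"
    using assms unfolding normal_ideal_def is_downset_def by blast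
  ultimately show ?thesis unfolding normal_ideal_def by blast
qed

section \<open>Relative annihilators and clopen sets\<close>

lemma lattice_ideal_rel_ann:
  fixes a b :: "'a::{bounded_lattice,distrib_lattice}"
  shows "lattice_ideal (rel_ann a b)"
  unfolding lattice_ideal_def is_downset_def rel_ann_def
proof (intro conjI allI impI ballI)
  fix x y assume "y \<in> {x. inf a x \<le> b}" "x \<le> y"
  have "inf a x \<le> inf a y" using \<open>x \<le> y\<close> by (rule inf_mono[OF order_refl])
  also have "\<dots> \<le> b" using \<open>y \<in> {x. inf a x \<le> b}\<close> by simp
  finally show "x \<in> {x. inf a x \<le> b}" by simp
qed (simp_all add: inf_sup_distrib1)

lemma compl_down_stone_diff: "PX - down_X (stone a - stone b) = stone_ideal (rel_ann a b)"
proof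
  show "PX - down_X (stone a - stone b) \<subseteq> stone_ideal (rel_ann a b)"
  proof
    fix x assume x: "x \<in> PX - down_X (stone a - stone b)"
    then have "prime_filter x" by (simp add: mem_pspace)
    let ?F = "{d. \<exists>c\<in>x. inf c a \<le> d}"
    show "x \<in> stone_ideal (rel_ann a b)"
    proof (rule ccontr)
      assume "x \<notin> stone_ideal (rel_ann a b)"
      then have "\<not> inf c a \<le> b" if "c \<in> x" for c
        using x that unfolding mem_stone_ideal rel_ann_def by (auto simp: inf_commute)
      then have "?F \<inter> {..b} = {}" by (auto dest: order.trans)
      with lattice_filter_adjoin[OF prime_filter_imp_lattice_filter[OF \<open>prime_filter x\<close>]]
        lattice_ideal_atMost
      obtain P where P: "prime_filter P" "?F \<subseteq> P" "P \<inter> {..b} = {}"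
        by (rule prime_filter_separation)
      have "x \<subseteq> ?F" using inf.cobounded1 by blast
      moreover have "a \<in> ?F" using prime_filter_top[OF \<open>prime_filter x\<close>] by force
      ultimately have "x \<subseteq> P" "a \<in> P" using P(2) by blast+
      moreover have "b \<notin> P" using P(3) by blast
      ultimately have "P \<in> stone a - stone b" "x \<subseteq> P" using P(1) by (auto simp: stone_def mem_pspace)
      with x show False unfolding down_X_def by blast
    qed
  qed
  show "stone_ideal (rel_ann a b) \<subseteq> PX - down_X (stone a - stone b)"
  proof
    fix x assume "x \<in> stone_ideal (rel_ann a b)"
    then obtain c where x: "x \<in> PX" "c \<in> x" "inf a c \<le> b"
      unfolding mem_stone_ideal rel_ann_def by blast
    have "y \<in> stone b" if "y \<in> stone a" "x \<subseteq> y" for y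
    proof -
      from that x(2) have "y \<in> PX" "inf a c \<in> y"
        by (auto simp: stone_def mem_pspace prime_filter_inf_iff)
      with x(3) show ?thesis by (auto simp: stone_def intro: pspace_upward)
    qed
    with x(1) show "x \<in> PX - down_X (stone a - stone b)" unfolding down_X_def by blast
  qed
qed

lemma clopen_eq_finite_Union_stone_diff:
  assumes "clopen_X U"
  obtains P where "finite P" "U = (\<Union>(a, b)\<in>P. stone a - stone b)"
proof -
  let ?Q = "{(a, b). stone a - stone b \<subseteq> U}"
  have "closedin PT U" using assms unfolding clopen_X_def by blast
  moreover have "U \<subseteq> (\<Union>(a, b)\<in>?Q. stone a - stone b)"
  proof
    fix x assume "x \<in> U"
    then obtain a b where "x \<in> stone a - stone b" "stone a - stone b \<subseteq> U"
      using ptop_basis assms unfolding clopen_X_def by blast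
    then show "x \<in> (\<Union>(a, b)\<in>?Q. stone a - stone b)" by auto
  qed
  ultimately obtain P where P: "finite P" "P \<subseteq> ?Q" "U \<subseteq> (\<Union>(a, b)\<in>P. stone a - stone b)"
    by (rule closedin_finite_subcover) (auto simp: split_beta openin_stone_diff)
  from P(2) have "(\<Union>(a, b)\<in>P. stone a - stone b) \<subseteq> U" by auto
  with P(3) have "U = (\<Union>(a, b)\<in>P. stone a - stone b)" by (rule subset_antisym)
  with P(1) show thesis by (rule that)
qed

lemma compl_down_Union_stone_diff:
  assumes "finite P"
  shows "PX - down_X (\<Union>(a, b)\<in>P. stone a - stone b) = stone_ideal (\<Inter>(a, b)\<in>P. rel_ann a b)"
  using assms
proof (induction P rule: finite_induct)
  case empty
  then show ?case by (simp add: down_X_def stone_ideal_UNIV)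
next
  case (insert p P)
  obtain a b where p: "p = (a, b)" by fastforce
  have "down_X (A \<union> B) = down_X A \<union> down_X B" for A B :: "'a set set"
    unfolding down_X_def by blast
  then have "PX - down_X (\<Union>(a, b)\<in>insert p P. stone a - stone b)
      = (PX - down_X (stone a - stone b)) \<inter> (PX - down_X (\<Union>(a, b)\<in>P. stone a - stone b))"
    by (simp add: p Diff_Un)
  also have "\<dots> = stone_ideal (rel_ann a b) \<inter> stone_ideal (\<Inter>(a, b)\<in>P. rel_ann a b)"
    by (simp only: compl_down_stone_diff insert.IH)
  also have "\<dots> = stone_ideal (rel_ann a b \<inter> (\<Inter>(a, b)\<in>P. rel_ann a b))"
  proof (rule stone_ideal_Int[symmetric])
    show "is_downset (rel_ann a b)"
      using lattice_ideal_rel_ann unfolding lattice_ideal_def by blast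
    have "lattice_ideal (\<Inter>(a, b)\<in>P. rel_ann a b)"
      by (rule lattice_ideal_Inter) (auto simp: lattice_ideal_rel_ann)
    then show "is_downset (\<Inter>(a, b)\<in>P. rel_ann a b)" unfolding lattice_ideal_def by blast
  qed
  finally show ?case by (simp add: p)
qed

lemma DM_set_compl_down_clopen:
  fixes A :: "'a::{bounded_lattice,distrib_lattice} itself" and U :: "'a set set"
  assumes "proHeyting A" "clopen_X U"
  shows "DM_set (PX - down_X U)"
proof -
  obtain P where "finite P" "U = (\<Union>(a, b)\<in>P. stone a - stone b)"
    using clopen_eq_finite_Union_stone_diff[OF assms(2)] .
  then have "PX - down_X U = stone_ideal (\<Inter>(a, b)\<in>P. rel_ann a b)"
    by (simp add: compl_down_Union_stone_diff)
  moreover have "normal_ideal (rel_ann a b)" for a b :: 'a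
    using assms(1) unfolding proHeyting_def by blast
  then have "normal_ideal (\<Inter>(a, b)\<in>P. rel_ann a b)"
    by (auto intro!: normal_ideal_Inter simp: split_beta)
  moreover have "lattice_ideal (\<Inter>(a, b)\<in>P. rel_ann a b)"
    by (rule lattice_ideal_Inter) (auto simp: lattice_ideal_rel_ann)
  ultimately show ?thesis by (simp add: DM_set_stone_ideal_iff)
qed

lemma proHeyting_iff_DM_set_compl_down_stone_diff:
  fixes A :: "'a::{bounded_lattice,distrib_lattice} itself"
  shows "proHeyting A \<longleftrightarrow> (\<forall>a b :: 'a. DM_set (PX - down_X (stone a - stone b)))"
  by (simp add: proHeyting_def compl_down_stone_diff DM_set_stone_ideal_iff lattice_ideal_rel_ann)

lemma clopen_X_Diff: "clopen_X U \<Longrightarrow> clopen_X V \<Longrightarrow> clopen_X (U - V)"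
  unfolding clopen_X_def by auto

theorem theorem5p11:
  fixes A :: "'a::{bounded_lattice,distrib_lattice} itself"
  shows "(proHeyting A
          \<longleftrightarrow> (\<forall>U V :: 'a set set. clopen_X U \<and> is_upset_X U \<and> clopen_X V \<and> is_upset_X V
                 \<longrightarrow> DM_set (pspace TYPE('a) - down_X (U - V))))
       \<and> (proHeyting A
          \<longleftrightarrow> (\<forall>U :: 'a set set. clopen_X U \<longrightarrow> DM_set (pspace TYPE('a) - down_X U)))"
proof (intro conjI iffI allI impI)
  fix U V :: "'a set set"
  assume "proHeyting A" "clopen_X U \<and> is_upset_X U \<and> clopen_X V \<and> is_upset_X V"
  then show "DM_set (PX - down_X (U - V))"
    by (simp add: DM_set_compl_down_clopen clopen_X_Diff)
next
  fix U :: "'a set set"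
  assume "proHeyting A" "clopen_X U"
  then show "DM_set (PX - down_X U)" by (rule DM_set_compl_down_clopen)
next
  assume "\<forall>U V :: 'a set set. clopen_X U \<and> is_upset_X U \<and> clopen_X V \<and> is_upset_X V
    \<longrightarrow> DM_set (PX - down_X (U - V))"
  then show "proHeyting A"
    by (simp add: proHeyting_iff_DM_set_compl_down_stone_diff clopen_stone is_upset_stone)
next
  assume "\<forall>U :: 'a set set. clopen_X U \<longrightarrow> DM_set (PX - down_X U)"
  then show "proHeyting A"
    by (simp add: proHeyting_iff_DM_set_compl_down_stone_diff clopen_stone clopen_X_Diff)
qed

end
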